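(* Let $r\ge1$ and let $\tau$ be a permutation of $F^r$ with $\tau(\mathbf 0)=\mathbf 0$. The Steiner quadruple system $SQS_\tau$ is point transitive if and only if $\tau^{-1}\in\mathrm{GL}(r,2)\,\tau\,\mathrm{GL}(r,2)$, i.e. there are $A,B\in\mathrm{GL}(r,2)$ with $\tau^{-1}(x)=A\tau(Bx)$ for all $x\in F^r$.
   Context: $F=\mathrm{GF}(2)$, $\mathbf 0$ is the all-zero vector. The point set consists of the $2^{r+1}$ symbols $(\{a\},\emptyset)$ and $(\emptyset,\{a\})$, $a\in F^r$; a pair $(X,Y)$ with $X,Y\subseteq F^r$ denotes the set of points $\{(\{x\},\emptyset):x\in X\}\cup\{(\emptyset,\{y\}):y\in Y\}$. $SQS_\tau=Q_0\cup Q_1\cup Q_\tau$ where $Q_0=\{(\{a,b,c,d\},\emptyset): a,b,c,d\in F^r \text{ pairwise distinct}, a+b+c+d=\mathbf 0\}$, $Q_1=\{(\emptyset,\{a,b,c,d\}): a,b,c,d\in F^r \text{ pairwise distinct}, a+b+c+d=\mathbf 0\}$, $Q_\tau=\{(\{a,c\},\{b,d\}): a,b,c,d\in F^r, \tau(a+c)=b+d\neq\mathbf 0\}$. A Steiner quadruple system is point transitive if its automorphism group (permutations of points preserving the set of quadruples) acts transitively on its points. *)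

theory Defs
  imports "HOL-Analysis.Analysis" "HOL-Library.Z2"
begin

text \<open>F = GF(2) is the field type bit; F^r is bit ^ 'n with CARD('n) = r.
  Points: Inl a stands for ({a},{}), Inr a stands for ({},{a}).\<close>

type_synonym 'n pt = "(bit ^ 'n) + (bit ^ 'n)"

definition Q0 :: "'n::finite pt set set" where
  "Q0 = {{Inl a, Inl b, Inl c, Inl d} | a b c d.
          distinct [a, b, c, d] \<and> a + b + c + d = 0}"

definition Q1 :: "'n::finite pt set set" where
  "Q1 = {{Inr a, Inr b, Inr c, Inr d} | a b c d.
          distinct [a, b, c, d] \<and> a + b + c + d = 0}"

definition Qtau :: "(bit ^ 'n \<Rightarrow> bit ^ 'n) \<Rightarrow> 'n::finite pt set set" where
  "Qtau \<tau> = {{Inl a, Inl c, Inr b, Inr d} | a b c d.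
          \<tau> (a + c) = b + d \<and> b + d \<noteq> 0}"

definition SQS :: "(bit ^ 'n \<Rightarrow> bit ^ 'n) \<Rightarrow> 'n::finite pt set set" where
  "SQS \<tau> = Q0 \<union> Q1 \<union> Qtau \<tau>"

definition automorphism :: "('p \<Rightarrow> 'p) \<Rightarrow> 'p set set \<Rightarrow> bool" where
  "automorphism \<sigma> S \<longleftrightarrow> bij \<sigma> \<and> (\<lambda>Q. \<sigma> ` Q) ` S = S"

definition point_transitive :: "'p set set \<Rightarrow> bool" where
  "point_transitive S \<longleftrightarrow> (\<forall>p q. \<exists>\<sigma>. automorphism \<sigma> S \<and> \<sigma> p = q)"

end

theory Submission
  imports Defs
begin

(* Call a pair of points closed if, whenever {p, q, s, t} and {p, q, s', t'} are blocks, so is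
   {s, t, s', t'}; automorphisms preserve closed pairs. Pairs on the same side are always closed,
   whereas a closed mixed pair forces \<tau> to be additive. Hence if \<tau> is not linear, an automorphism
   moving a left point to a right point swaps the two sides; the blocks of Q0 and Q1 make its two
   halves affine, and the blocks of Q\<tau> through 0 give \<tau> \<circ> R \<circ> \<tau> = P for their linear parts.
   Conversely, such P and R define the side swap Inl x \<mapsto> Inr (P x), Inr y \<mapsto> Inl (R y), which
   together with the translations acts transitively on the points. *)

instance bit :: finite
proof
  have "(UNIV :: bit set) = {0, 1}" by (auto intro: bit.exhaust)
  then show "finite (UNIV :: bit set)" by (metis finite.emptyI finite.insertI)
qed

lemma bit_vec_add_self [simp]: "(x :: bit ^ 'n) + x = 0"
proof -
  have "(b :: bit) + b = 0" for b by (cases b) simp_all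
  then show ?thesis by (simp add: vec_eq_iff)
qed

lemma bit_vec_add_cancel_left [simp]: "(x :: bit ^ 'n) + (x + y) = y"
  by (simp add: add.assoc [symmetric])

lemma bit_vec_add_eq_0_iff: "(x :: bit ^ 'n) + y = 0 \<longleftrightarrow> x = y"
  by (metis bit_vec_add_cancel_left add_0_right)

lemma additive_if_preserves_planes:
  fixes f :: "bit ^ 'n \<Rightarrow> bit ^ 'm"
  assumes planes: "\<And>a b c d. distinct [a, b, c, d] \<Longrightarrow> a + b + c + d = 0 \<Longrightarrow>
                      f a + f b + f c + f d = 0"
  shows "Modules.additive (\<lambda>x. f x + f 0)"
proof
  fix x y :: "bit ^ 'n"
  have "f (x + y) + f 0 = f x + f y"
  proof (cases "x = 0 \<or> y = 0 \<or> x = y")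
    case False
    then have "distinct [0, x, y, x + y]" by (auto simp: bit_vec_add_eq_0_iff)
    then have "f 0 + f x + f y + f (x + y) = 0" by (rule planes) (simp add: add_ac)
    then show ?thesis by (simp add: bit_vec_add_eq_0_iff add_ac)
  qed (auto simp: add_ac)
  then show "f (x + y) + f 0 = (f x + f 0) + (f y + f 0)" by (simp add: add_ac)
qed

lemma bit_vec_additive_imp_linear:
  fixes h :: "bit ^ 'n \<Rightarrow> bit ^ 'm"
  assumes "Modules.additive h"
  shows "Vector_Spaces.linear (*s) (*s) h"
proof
  fix c :: bit and x
  show "h (c *s x) = c *s h x"
    using additive.zero [OF assms] by (cases c) simp_all
qed (simp add: additive.add [OF assms])

definition additive_bij :: "('a::ab_group_add \<Rightarrow> 'a) \<Rightarrow> bool" where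
  "additive_bij h \<longleftrightarrow> Modules.additive h \<and> bij h"

lemma additive_bij_inv:
  assumes "additive_bij h"
  shows "additive_bij (inv h)"
proof -
  have h: "Modules.additive h" "bij h" using assms additive_bij_def by auto
  have "inv h (x + y) = inv h x + inv h y" for x y
  proof -
    have "h (inv h x + inv h y) = x + y"
      using h by (simp add: additive.add bij_is_surj surj_f_inv_f)
    then show ?thesis using h(2) by (simp add: bij_is_inj inv_f_eq)
  qed
  then show ?thesis using h(2) by (simp add: additive_bij_def additive.intro bij_imp_bij_inv)
qed

lemma additive_bij_if_inj_preserves_planes:
  fixes f :: "bit ^ 'n \<Rightarrow> bit ^ 'n"
  assumes "\<And>a b c d. distinct [a, b, c, d] \<Longrightarrow> a + b + c + d = 0 \<Longrightarrow> f a + f b + f c + f d = 0"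
    and "inj f"
  shows "additive_bij (\<lambda>x. f x + f 0)"
proof -
  have "inj (\<lambda>x. f x + f 0)" using assms(2) by (simp add: inj_def)
  then have "bij (\<lambda>x. f x + f 0)" by (simp add: bijI finite_UNIV_inj_surj)
  then show ?thesis using additive_if_preserves_planes [OF assms(1)] by (simp add: additive_bij_def)
qed

lemma additive_bij_matrixE:
  fixes h :: "bit ^ 'n \<Rightarrow> bit ^ 'n"
  assumes "additive_bij h"
  obtains M where "invertible M" and "h = (*v) M"
proof
  have h: "Modules.additive h" "bij h" using assms additive_bij_def by auto
  show M: "h = (*v) (matrix h)"
    using matrix_vector_mul(1) [OF bit_vec_additive_imp_linear [OF h(1)]] by (simp add: fun_eq_iff)
  show "invertible (matrix h)"
    unfolding invertible_left_inverse matrix_left_invertible_injective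
    using M bij_is_inj [OF h(2)] by metis
qed

lemma invertible_matrix_additive_bij:
  fixes M :: "bit ^ 'n ^ 'n"
  assumes "invertible M"
  shows "additive_bij ((*v) M)"
proof -
  have "Modules.additive ((*v) M)" by standard (simp add: matrix_vector_right_distrib)
  moreover obtain M' where "M ** M' = mat 1" "M' ** M = mat 1" using assms invertible_def by blast
  then have "bij ((*v) M)"
    by (intro o_bij [where g = "(*v) M'"]) (simp_all add: fun_eq_iff matrix_vector_mul_assoc)
  ultimately show ?thesis by (simp add: additive_bij_def)
qed

(* \<tau> \<circ> R \<circ> \<tau> = P is the double-coset condition \<tau>\<^sup>-\<^sup>1 = R \<circ> \<tau> \<circ> P\<^sup>-\<^sup>1 with the inverses cleared. *)
definition inv_in_double_coset :: "('a::ab_group_add \<Rightarrow> 'a) \<Rightarrow> bool" where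
  "inv_in_double_coset \<tau> \<longleftrightarrow> (\<exists>P R. additive_bij P \<and> additive_bij R \<and> (\<forall>y. \<tau> (R (\<tau> y)) = P y))"

lemma additive_bij_imp_inv_in_double_coset:
  assumes "additive_bij \<tau>"
  shows "inv_in_double_coset \<tau>"
proof -
  have "\<tau> (inv \<tau> (\<tau> y)) = \<tau> y" for y using assms by (simp add: additive_bij_def bij_is_inj)
  then show ?thesis
    unfolding inv_in_double_coset_def using assms additive_bij_inv [OF assms] by blast
qed

lemma inv_in_double_coset_iff_matrices:
  fixes \<tau> :: "bit ^ 'n \<Rightarrow> bit ^ 'n"
  assumes "bij \<tau>"
  shows "(\<exists>A B :: bit ^ 'n ^ 'n. invertible A \<and> invertible B \<and> (\<forall>x. inv \<tau> x = A *v \<tau> (B *v x)))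
     \<longleftrightarrow> inv_in_double_coset \<tau>"
proof
  assume "\<exists>A B :: bit ^ 'n ^ 'n. invertible A \<and> invertible B \<and> (\<forall>x. inv \<tau> x = A *v \<tau> (B *v x))"
  then obtain A B :: "bit ^ 'n ^ 'n" where A: "invertible A" and B: "invertible B"
    and AB: "\<And>x. inv \<tau> x = A *v \<tau> (B *v x)" by blast
  have B': "additive_bij (inv ((*v) B))"
    using additive_bij_inv invertible_matrix_additive_bij [OF B] by blast
  have "\<tau> (A *v \<tau> y) = inv ((*v) B) y" for y
    using AB [of "inv ((*v) B) y"] assms invertible_matrix_additive_bij [OF B]
    by (metis additive_bij_def bij_inv_eq_iff)
  then show "inv_in_double_coset \<tau>"
    unfolding inv_in_double_coset_def using invertible_matrix_additive_bij [OF A] B' by blast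
next
  assume "inv_in_double_coset \<tau>"
  then obtain P R where P: "additive_bij P" and R: "additive_bij R"
    and PR: "\<And>y. \<tau> (R (\<tau> y)) = P y" unfolding inv_in_double_coset_def by blast
  obtain A where A: "invertible A" "R = (*v) A"
    using R additive_bij_matrixE by blast
  obtain B where B: "invertible B" "inv P = (*v) B"
    using additive_bij_inv [OF P] additive_bij_matrixE by blast
  have "inv \<tau> x = R (\<tau> (inv P x))" for x
    using PR [of "inv P x"] P assms by (metis additive_bij_def bij_inv_eq_iff)
  then show "\<exists>A B :: bit ^ 'n ^ 'n. invertible A \<and> invertible B \<and> (\<forall>x. inv \<tau> x = A *v \<tau> (B *v x))"
    using A B by metis
qed

definition design_iso :: "('p \<Rightarrow> 'q) \<Rightarrow> 'p set set \<Rightarrow> 'q set set \<Rightarrow> bool" where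
  "design_iso \<sigma> S T \<longleftrightarrow> bij \<sigma> \<and> (\<lambda>Q. \<sigma> ` Q) ` S = T"

lemma automorphism_iff_design_iso: "automorphism \<sigma> S \<longleftrightarrow> design_iso \<sigma> S S"
  by (simp add: automorphism_def design_iso_def)

lemma design_isoI:
  assumes "\<sigma>' \<circ> \<sigma> = id" and "\<sigma> \<circ> \<sigma>' = id"
    and "\<And>Q. Q \<in> S \<Longrightarrow> \<sigma> ` Q \<in> T" and "\<And>Q. Q \<in> T \<Longrightarrow> \<sigma>' ` Q \<in> S"
  shows "design_iso \<sigma> S T"
proof -
  have "Q \<in> (\<lambda>Q. \<sigma> ` Q) ` S" if "Q \<in> T" for Q
  proof
    show "Q = \<sigma> ` (\<sigma>' ` Q)" using assms(2) by (simp add: image_comp)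
  qed (use assms(4) that in blast)
  then have "T \<subseteq> (\<lambda>Q. \<sigma> ` Q) ` S" by blast
  moreover have "(\<lambda>Q. \<sigma> ` Q) ` S \<subseteq> T" using assms(3) by blast
  moreover have "bij \<sigma>" using assms(1,2) by (rule o_bij)
  ultimately show ?thesis unfolding design_iso_def by blast
qed

lemma design_iso_image_mem_iff:
  assumes "design_iso \<sigma> S T"
  shows "\<sigma> ` X \<in> T \<longleftrightarrow> X \<in> S"
proof -
  have "inj (\<lambda>Q. \<sigma> ` Q)"
    using assms unfolding design_iso_def by (meson bij_is_inj inj_image_eq_iff injI)
  then show ?thesis using assms unfolding design_iso_def by (blast dest: injD)
qed

lemma design_iso_inv:
  assumes "design_iso \<sigma> S T"
  shows "design_iso (inv \<sigma>) T S"
proof -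
  have "bij \<sigma>" and T: "T = (\<lambda>Q. \<sigma> ` Q) ` S" using assms unfolding design_iso_def by auto
  then have "(\<lambda>Q. inv \<sigma> ` Q) ` T = S" by (simp add: image_comp bij_is_inj image_inv_f_f)
  then show ?thesis using \<open>bij \<sigma>\<close> by (simp add: design_iso_def bij_imp_bij_inv)
qed

lemma design_iso_comp:
  assumes "design_iso \<sigma> S T" and "design_iso \<rho> T U"
  shows "design_iso (\<rho> \<circ> \<sigma>) S U"
proof -
  have "(\<lambda>Q. (\<rho> \<circ> \<sigma>) ` Q) ` S = (\<lambda>Q. \<rho> ` Q) ` ((\<lambda>Q. \<sigma> ` Q) ` S)"
    by (simp add: image_image image_comp)
  then show ?thesis using assms unfolding design_iso_def by (simp add: bij_comp)
qed

lemma SQS_blockE: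
  assumes "X \<in> SQS \<tau>"
  obtains (left) a b c d where "X = {Inl a, Inl b, Inl c, Inl d}"
      "distinct [a, b, c, d]" "a + b + c + d = 0"
    | (right) a b c d where "X = {Inr a, Inr b, Inr c, Inr d}"
      "distinct [a, b, c, d]" "a + b + c + d = 0"
    | (mixed) a c b d where "X = {Inl a, Inl c, Inr b, Inr d}" "\<tau> (a + c) = b + d" "b + d \<noteq> 0"
  using assms unfolding SQS_def Q0_def Q1_def Qtau_def by blast

lemma SQS_InlI: "distinct [a, b, c, d] \<Longrightarrow> a + b + c + d = 0 \<Longrightarrow> {Inl a, Inl b, Inl c, Inl d} \<in> SQS \<tau>"
  unfolding SQS_def Q0_def by blast

lemma SQS_InrI: "distinct [a, b, c, d] \<Longrightarrow> a + b + c + d = 0 \<Longrightarrow> {Inr a, Inr b, Inr c, Inr d} \<in> SQS \<tau>"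
  unfolding SQS_def Q1_def by blast

lemma SQS_mixedI: "\<tau> (a + c) = b + d \<Longrightarrow> b + d \<noteq> 0 \<Longrightarrow> {Inl a, Inl c, Inr b, Inr d} \<in> SQS \<tau>"
  unfolding SQS_def Qtau_def by blast

lemma insert4_eq_imp_distinct_sum_eq:
  fixes a b c d :: "'a::comm_monoid_add"
  assumes "{a, b, c, d} = {a', b', c', d'}" and "distinct [a', b', c', d']"
  shows "distinct [a, b, c, d] \<and> a + b + c + d = a' + b' + c' + d'"
proof -
  have "card (set [a, b, c, d]) = length [a, b, c, d]"
    using assms distinct_card [OF assms(2)] by simp
  then have d: "distinct [a, b, c, d]" by (rule card_distinct)
  have "a + b + c + d = sum id {a, b, c, d}" using d by (simp add: add.assoc)
  also have "\<dots> = a' + b' + c' + d'" using assms by (simp add: add.assoc)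
  finally show ?thesis using d by simp
qed

lemma SQS_Inl4_iff:
  fixes a b c d :: "bit ^ 'n::finite"
  shows "{Inl a, Inl b, Inl c, Inl d} \<in> SQS \<tau> \<longleftrightarrow> distinct [a, b, c, d] \<and> a + b + c + d = 0"
proof
  assume "{Inl a, Inl b, Inl c, Inl d} \<in> SQS \<tau>"
  then show "distinct [a, b, c, d] \<and> a + b + c + d = 0"
  proof (cases rule: SQS_blockE)
    case (left a' b' c' d')
    then have "Inl ` {a, b, c, d} = (Inl ` {a', b', c', d'} :: 'n pt set)"
      by (simp only: image_insert image_empty)
    then have "{a, b, c, d} = {a', b', c', d'}" by (rule inj_image_eq_iff [OF inj_Inl, THEN iffD1])
    then show ?thesis using insert4_eq_imp_distinct_sum_eq left(2,3) by metis
  next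
    case (right a' b' c' d')
    then have "Inr a' \<in> {Inl a, Inl b, Inl c, Inl d}" by (metis insertI1)
    then show ?thesis by simp
  next
    case (mixed a' c' b' d')
    then have "Inr b' \<in> {Inl a, Inl b, Inl c, Inl d}" by (metis insertI1 insertI2)
    then show ?thesis by simp
  qed
qed (simp add: SQS_InlI)

lemma SQS_mixed_iff:
  "{Inl a, Inl c, Inr b, Inr d} \<in> SQS \<tau> \<longleftrightarrow> \<tau> (a + c) = b + d \<and> b + d \<noteq> 0"
proof
  assume "{Inl a, Inl c, Inr b, Inr d} \<in> SQS \<tau>"
  then show "\<tau> (a + c) = b + d \<and> b + d \<noteq> 0"
  proof (cases rule: SQS_blockE)
    case (left a' b' c' d')
    then have "Inr b \<in> {Inl a', Inl b', Inl c', Inl d'}" by (metis insertI1 insertI2)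
    then show ?thesis by simp
  next
    case (right a' b' c' d')
    then have "Inl a \<in> {Inr a', Inr b', Inr c', Inr d'}" by (metis insertI1)
    then show ?thesis by simp
  next
    case (mixed a' c' b' d')
    have vimage: "Inl -` {Inl x, Inl z, Inr y, Inr w} = {x, z}"
      "Inr -` {Inl x, Inl z, Inr y, Inr w} = {y, w}" for x y z w :: "bit ^ 'n"
      by auto
    have "{a, c} = {a', c'}" and "{b, d} = {b', d'}"
      using vimage [of a c b d] vimage [of a' c' b' d'] mixed(1) by metis+
    then have "a + c = a' + c'" and "b + d = b' + d'" by (auto simp: doubleton_eq_iff add.commute)
    then show ?thesis using mixed(2,3) by simp
  qed
qed (simp add: SQS_mixedI)

lemma SQS_not_three_Inl_one_Inr: "{Inl a, Inl c, Inl e, Inr b} \<notin> SQS \<tau>"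
proof
  assume "{Inl a, Inl c, Inl e, Inr b} \<in> SQS \<tau>"
  then show False
  proof (cases rule: SQS_blockE)
    case (left a' b' c' d')
    then have "Inr b \<in> {Inl a', Inl b', Inl c', Inl d'}" by (metis insertI1 insertI2)
    then show False by simp
  next
    case (right a' b' c' d')
    then have "Inl a \<in> {Inr a', Inr b', Inr c', Inr d'}" by (metis insertI1)
    then show False by simp
  next
    case (mixed a' c' b' d')
    then have "Inr b' \<in> {Inl a, Inl c, Inl e, Inr b}" and "Inr d' \<in> {Inl a, Inl c, Inl e, Inr b}"
      by (metis insertI1 insertI2)+
    then have "b' = b" and "d' = b" by simp_all
    then show False using mixed(3) by simp
  qed
qed

definition swap_sides :: "('a \<Rightarrow> 'b) \<Rightarrow> ('c \<Rightarrow> 'd) \<Rightarrow> 'a + 'c \<Rightarrow> 'd + 'b" where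
  "swap_sides P R = case_sum (Inr \<circ> P) (Inl \<circ> R)"

lemma swap_sides_simps [simp]:
  "swap_sides P R (Inl x) = Inr (P x)" "swap_sides P R (Inr y) = Inl (R y)"
  by (simp_all add: swap_sides_def)

lemma swap_sides_maps_blocks:
  fixes P R \<tau> \<tau>' :: "bit ^ 'n \<Rightarrow> bit ^ 'n"
  assumes P: "additive_bij P" and R: "additive_bij R"
    and \<tau>: "\<tau> 0 = 0" and \<tau>': "\<And>y. \<tau>' (R (\<tau> y)) = P y" and Q: "Q \<in> SQS \<tau>"
  shows "swap_sides P R ` Q \<in> SQS \<tau>'"
proof -
  have P_add: "Modules.additive P" and P_inj: "inj P" and R_add: "Modules.additive R" and R_inj: "inj R"
    using P R by (auto simp: additive_bij_def bij_is_inj)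
  from Q show ?thesis
  proof (cases rule: SQS_blockE)
    case (left a b c d)
    have "P a + P b + P c + P d = P (a + b + c + d)" by (simp add: additive.add [OF P_add])
    then show ?thesis
      using left P_inj additive.zero [OF P_add] by (simp add: SQS_InrI inj_eq)
  next
    case (right a b c d)
    have "R a + R b + R c + R d = R (a + b + c + d)" by (simp add: additive.add [OF R_add])
    then show ?thesis
      using right R_inj additive.zero [OF R_add] by (simp add: SQS_InlI inj_eq)
  next
    case (mixed a c b d)
    have "a + c \<noteq> 0" using mixed(2,3) \<tau> by auto
    then have "P a + P c \<noteq> 0"
      using P_inj additive.zero [OF P_add] by (metis additive.add [OF P_add] injD)
    moreover have "\<tau>' (R b + R d) = P a + P c"
      using \<tau>' [of "a + c"] mixed(2) by (simp add: additive.add [OF P_add] additive.add [OF R_add])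
    moreover have "swap_sides P R ` Q = {Inl (R b), Inl (R d), Inr (P a), Inr (P c)}"
      using mixed(1) by auto
    ultimately show ?thesis by (simp add: SQS_mixedI)
  qed
qed

lemma swap_sides_design_iso:
  fixes P R \<tau> \<tau>' :: "bit ^ 'n \<Rightarrow> bit ^ 'n"
  assumes P: "additive_bij P" and R: "additive_bij R"
    and \<tau>: "bij \<tau>" "\<tau> 0 = 0" and \<tau>': "\<And>y. \<tau>' (R (\<tau> y)) = P y"
  shows "design_iso (swap_sides P R) (SQS \<tau>) (SQS \<tau>')"
proof (rule design_isoI)
  have "bij P" "bij R" using P R additive_bij_def by auto
  then show "swap_sides (inv R) (inv P) \<circ> swap_sides P R = id"
    and "swap_sides P R \<circ> swap_sides (inv R) (inv P) = id"
    by (auto simp: fun_eq_iff swap_sides_def bij_is_inj bij_is_surj surj_f_inv_f split: sum.split)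
  have \<tau>'_0: "\<tau>' 0 = 0"
    using \<tau>' [of 0] P R \<tau>(2) by (simp add: additive_bij_def additive.zero)
  have "\<tau> (inv P (\<tau>' y)) = inv R y" for y
  proof -
    define z where "z = inv \<tau> (inv R y)"
    have \<tau>z: "\<tau> z = inv R y" using \<tau>(1) by (simp add: z_def bij_is_surj surj_f_inv_f)
    then have "\<tau>' y = P z" using \<tau>' [of z] R by (simp add: additive_bij_def bij_is_surj surj_f_inv_f)
    then show ?thesis using \<tau>z P by (simp add: additive_bij_def bij_is_inj)
  qed
  then show "swap_sides (inv R) (inv P) ` Q \<in> SQS \<tau>" if "Q \<in> SQS \<tau>'" for Q
    using swap_sides_maps_blocks [OF additive_bij_inv [OF R] additive_bij_inv [OF P] \<tau>'_0 _ that] by blast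
qed (rule swap_sides_maps_blocks [OF P R \<tau>(2) \<tau>'])

lemma mirror_design_iso:
  assumes "bij \<tau>" and "\<tau> 0 = 0"
  shows "design_iso (swap_sides id id) (SQS (inv \<tau>)) (SQS \<tau>)"
proof (rule swap_sides_design_iso)
  show "additive_bij id" by (simp add: additive_bij_def additive.intro)
  show "bij (inv \<tau>)" using assms(1) by (rule bij_imp_bij_inv)
  show "inv \<tau> 0 = 0" using assms by (simp add: bij_is_inj inv_f_eq)
  show "\<tau> (id (inv \<tau> y)) = id y" for y using assms(1) by (simp add: bij_is_surj surj_f_inv_f)
qed (simp add: additive_bij_def additive.intro)

lemma SQS_Inr4_iff:
  assumes "bij \<tau>" and "\<tau> 0 = 0"
  shows "{Inr a, Inr b, Inr c, Inr d} \<in> SQS \<tau> \<longleftrightarrow> distinct [a, b, c, d] \<and> a + b + c + d = 0"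
proof -
  have "{Inr a, Inr b, Inr c, Inr d} = swap_sides id id ` {Inl a, Inl b, Inl c, Inl d}" by simp
  then show ?thesis
    using design_iso_image_mem_iff [OF mirror_design_iso [OF assms]] SQS_Inl4_iff by metis
qed

definition closed_pair :: "'p set set \<Rightarrow> 'p \<Rightarrow> 'p \<Rightarrow> bool" where
  "closed_pair S p q \<longleftrightarrow> (\<forall>s t s' t'. distinct [p, q, s, t, s', t'] \<and>
      {p, q, s, t} \<in> S \<and> {p, q, s', t'} \<in> S \<longrightarrow> {s, t, s', t'} \<in> S)"

lemma closed_pair_design_iso:
  assumes iso: "design_iso \<sigma> S T" and closed: "closed_pair S p q"
  shows "closed_pair T (\<sigma> p) (\<sigma> q)"
  unfolding closed_pair_def
proof (intro allI impI, elim conjE)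
  fix s t s' t'
  assume d: "distinct [\<sigma> p, \<sigma> q, s, t, s', t']"
    and b: "{\<sigma> p, \<sigma> q, s, t} \<in> T" "{\<sigma> p, \<sigma> q, s', t'} \<in> T"
  have "surj \<sigma>" and "inj \<sigma>" using iso by (simp_all add: design_iso_def bij_is_surj bij_is_inj)
  then obtain s0 t0 s1 t1 where e: "s = \<sigma> s0" "t = \<sigma> t0" "s' = \<sigma> s1" "t' = \<sigma> t1"
    by (metis surj_f_inv_f)
  have "distinct (map \<sigma> [p, q, s0, t0, s1, t1])" using d e by simp
  then have "distinct [p, q, s0, t0, s1, t1]" by (simp only: distinct_map)
  moreover have "\<sigma> ` {p, q, s0, t0} \<in> T" "\<sigma> ` {p, q, s1, t1} \<in> T" using b e by simp_all
  then have "{p, q, s0, t0} \<in> S" "{p, q, s1, t1} \<in> S"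
    using design_iso_image_mem_iff [OF iso] by blast+
  ultimately have "{s0, t0, s1, t1} \<in> S" using closed unfolding closed_pair_def by blast
  then have "\<sigma> ` {s0, t0, s1, t1} \<in> T" using design_iso_image_mem_iff [OF iso] by blast
  then show "{s, t, s', t'} \<in> T" using e by simp
qed

lemma closed_pair_automorphism_iff:
  assumes "automorphism \<sigma> S"
  shows "closed_pair S (\<sigma> p) (\<sigma> q) \<longleftrightarrow> closed_pair S p q"
proof
  have iso: "design_iso \<sigma> S S" using assms automorphism_iff_design_iso by blast
  then have "inj \<sigma>" by (simp add: design_iso_def bij_is_inj)
  then show "closed_pair S p q" if "closed_pair S (\<sigma> p) (\<sigma> q)"
    using closed_pair_design_iso [OF design_iso_inv [OF iso] that] by simp
  show "closed_pair S (\<sigma> p) (\<sigma> q)" if "closed_pair S p q"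
    using closed_pair_design_iso [OF iso that] .
qed

lemma SQS_block_through_Inl_pairE:
  assumes "distinct [Inl a, Inl c, s, t]" and "{Inl a, Inl c, s, t} \<in> SQS \<tau>"
  obtains (left) e e' where "s = Inl e" "t = Inl e'" "e + e' = a + c"
    | (right) b d where "s = Inr b" "t = Inr d" "\<tau> (a + c) = b + d"
proof (cases s; cases t)
  fix e e' assume st: "s = Inl e" "t = Inl e'"
  then have "a + c + e + e' = 0" using assms(2) SQS_Inl4_iff by blast
  then have "e + e' = a + c" by (metis add.assoc bit_vec_add_eq_0_iff)
  then show thesis using st left by blast
next
  fix b d assume st: "s = Inr b" "t = Inr d"
  then show thesis using assms(2) SQS_mixed_iff right by blast
next
  fix e b assume "s = Inl e" "t = Inr b"
  then show thesis using assms(2) SQS_not_three_Inl_one_Inr by blast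
next
  fix b e assume "s = Inr b" "t = Inl e"
  then have "{Inl a, Inl c, Inl e, Inr b} \<in> SQS \<tau>" using assms(2) by (simp add: insert_commute)
  then show thesis using SQS_not_three_Inl_one_Inr by blast
qed

lemma closed_pair_Inl: "closed_pair (SQS \<tau>) (Inl a) (Inl c)"
  unfolding closed_pair_def
proof (intro allI impI, elim conjE)
  fix s t s' t'
  assume d: "distinct [Inl a, Inl c, s, t, s', t']"
    and b: "{Inl a, Inl c, s, t} \<in> SQS \<tau>" "{Inl a, Inl c, s', t'} \<in> SQS \<tau>"
  have "distinct [Inl a, Inl c, s, t]" "distinct [Inl a, Inl c, s', t']" using d by auto
  note cases = SQS_block_through_Inl_pairE [OF this(1) b(1)] SQS_block_through_Inl_pairE [OF this(2) b(2)]
  show "{s, t, s', t'} \<in> SQS \<tau>"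
  proof (rule cases(1); rule cases(2))
    fix e1 e1' e2 e2'
    assume "s = Inl e1" "t = Inl e1'" "e1 + e1' = a + c" "s' = Inl e2" "t' = Inl e2'" "e2 + e2' = a + c"
    moreover have "e1 + e1' + e2 + e2' = (e1 + e1') + (e2 + e2')" by (simp add: add.assoc)
    ultimately show ?thesis using d by (simp add: SQS_InlI)
  next
    fix e1 e1' b2 d2
    assume "s = Inl e1" "t = Inl e1'" "e1 + e1' = a + c" "s' = Inr b2" "t' = Inr d2" "\<tau> (a + c) = b2 + d2"
    then show ?thesis using d by (simp add: SQS_mixedI bit_vec_add_eq_0_iff)
  next
    fix b1 d1 e2 e2'
    assume st: "s = Inr b1" "t = Inr d1" "\<tau> (a + c) = b1 + d1" "s' = Inl e2" "t' = Inl e2'"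
      "e2 + e2' = a + c"
    then have "{Inl e2, Inl e2', Inr b1, Inr d1} \<in> SQS \<tau>"
      using d by (simp add: SQS_mixedI bit_vec_add_eq_0_iff)
    moreover have "{s, t, s', t'} = {Inl e2, Inl e2', Inr b1, Inr d1}" using st by auto
    ultimately show ?thesis by simp
  next
    fix b1 d1 b2 d2
    assume "s = Inr b1" "t = Inr d1" "\<tau> (a + c) = b1 + d1" "s' = Inr b2" "t' = Inr d2" "\<tau> (a + c) = b2 + d2"
    moreover have "b1 + d1 + b2 + d2 = (b1 + d1) + (b2 + d2)" by (simp add: add.assoc)
    ultimately show ?thesis using d by (simp add: SQS_InrI)
  qed
qed

lemma closed_pair_Inr:
  assumes "bij \<tau>" and "\<tau> 0 = 0"
  shows "closed_pair (SQS \<tau>) (Inr a) (Inr c)"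
  using closed_pair_design_iso [OF mirror_design_iso [OF assms] closed_pair_Inl] by simp

lemma closed_mixed_pair_imp_additive:
  fixes \<tau> :: "bit ^ 'n \<Rightarrow> bit ^ 'n"
  assumes inj: "inj \<tau>" and \<tau>0: "\<tau> 0 = 0" and closed: "closed_pair (SQS \<tau>) (Inl a) (Inr b)"
  shows "Modules.additive \<tau>"
proof
  fix u v
  show "\<tau> (u + v) = \<tau> u + \<tau> v"
  proof (cases "u = 0 \<or> v = 0 \<or> u = v")
    case False
    then have "\<tau> u \<noteq> 0" "\<tau> v \<noteq> 0" "\<tau> u \<noteq> \<tau> v" using inj \<tau>0 by (metis injD)+
    have reorder: "{Inl x, Inr y, Inl z, Inr w} = {Inl x, Inl z, Inr y, Inr w}" for x y z w :: "bit ^ 'n"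
      by auto
    have "{Inl a, Inr b, Inl (a + u), Inr (b + \<tau> u)} \<in> SQS \<tau>"
      "{Inl a, Inr b, Inl (a + v), Inr (b + \<tau> v)} \<in> SQS \<tau>"
      using SQS_mixedI [of \<tau> a _ b] \<open>\<tau> u \<noteq> 0\<close> \<open>\<tau> v \<noteq> 0\<close> by (simp_all add: reorder)
    moreover have "distinct [Inl a, Inr b, Inl (a + u), Inr (b + \<tau> u), Inl (a + v), Inr (b + \<tau> v)]"
      using False \<open>\<tau> u \<noteq> 0\<close> \<open>\<tau> v \<noteq> 0\<close> \<open>\<tau> u \<noteq> \<tau> v\<close> by simp
    ultimately have "{Inl (a + u), Inr (b + \<tau> u), Inl (a + v), Inr (b + \<tau> v)} \<in> SQS \<tau>"
      using closed unfolding closed_pair_def by blast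
    then have "{Inl (a + u), Inl (a + v), Inr (b + \<tau> u), Inr (b + \<tau> v)} \<in> SQS \<tau>"
      by (simp add: reorder)
    then have "\<tau> ((a + u) + (a + v)) = (b + \<tau> u) + (b + \<tau> v)" using SQS_mixed_iff by blast
    then show ?thesis by (simp add: add_ac)
  qed (auto simp: \<tau>0)
qed

lemma automorphism_swaps_sides:
  assumes \<tau>: "bij \<tau>" "\<tau> 0 = 0" "\<not> Modules.additive \<tau>"
    and \<sigma>: "automorphism \<sigma> (SQS \<tau>)" "\<sigma> (Inl 0) = Inr 0"
  shows "\<sigma> (Inl x) \<in> range Inr" and "\<sigma> (Inr y) \<in> range Inl"
proof -
  have mixed_not_closed: "\<not> closed_pair (SQS \<tau>) (Inl a) (Inr b)" for a b
    using closed_mixed_pair_imp_additive \<tau> bij_is_inj by blast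
  show "\<sigma> (Inl x) \<in> range Inr"
  proof (cases "\<sigma> (Inl x)")
    case (Inl z)
    have "closed_pair (SQS \<tau>) (\<sigma> (Inl x)) (\<sigma> (Inl 0))"
      using closed_pair_Inl closed_pair_automorphism_iff [OF \<sigma>(1)] by blast
    then show ?thesis using Inl \<sigma>(2) mixed_not_closed by simp
  qed simp
  show "\<sigma> (Inr y) \<in> range Inl"
  proof (cases "\<sigma> (Inr y)")
    case (Inr z)
    have "closed_pair (SQS \<tau>) (\<sigma> (Inl 0)) (\<sigma> (Inr y))"
      using closed_pair_Inr [OF \<tau>(1,2)] \<sigma>(2) Inr by simp
    then show ?thesis using closed_pair_automorphism_iff [OF \<sigma>(1)] mixed_not_closed by blast
  qed simp
qed

lemma side_swapping_automorphism_imp_inv_in_double_coset: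
  fixes \<tau> :: "bit ^ 'n \<Rightarrow> bit ^ 'n"
  assumes \<tau>: "bij \<tau>" "\<tau> 0 = 0" and \<sigma>: "automorphism \<sigma> (SQS \<tau>)"
    and sides: "\<And>x. \<sigma> (Inl x) \<in> range Inr" "\<And>y. \<sigma> (Inr y) \<in> range Inl"
  shows "inv_in_double_coset \<tau>"
proof -
  define f where "f x = projr (\<sigma> (Inl x))" for x
  define g where "g y = projl (\<sigma> (Inr y))" for y
  have f: "\<sigma> (Inl x) = Inr (f x)" and g: "\<sigma> (Inr y) = Inl (g y)" for x y
    using sides [of x] sides [of y] by (auto simp: f_def g_def)
  have iso: "design_iso \<sigma> (SQS \<tau>) (SQS \<tau>)" using \<sigma> by (simp only: automorphism_iff_design_iso)
  then have "inj \<sigma>" by (simp add: design_iso_def bij_is_inj)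
  have "inj f" "inj g" using f g \<open>inj \<sigma>\<close> by (metis injI injD sum.inject)+
  have "f a + f b + f c + f d = 0" if "distinct [a, b, c, d]" "a + b + c + d = 0" for a b c d
  proof -
    have "\<sigma> ` {Inl a, Inl b, Inl c, Inl d} \<in> SQS \<tau>"
      unfolding design_iso_image_mem_iff [OF iso] by (rule SQS_InlI [OF that])
    then show ?thesis using f by (simp add: SQS_Inr4_iff [OF \<tau>])
  qed
  then have P: "additive_bij (\<lambda>x. f x + f 0)"
    using \<open>inj f\<close> by (rule additive_bij_if_inj_preserves_planes)
  have "g a + g b + g c + g d = 0" if "distinct [a, b, c, d]" "a + b + c + d = 0" for a b c d
  proof -
    have "\<sigma> ` {Inr a, Inr b, Inr c, Inr d} \<in> SQS \<tau>"
      unfolding design_iso_image_mem_iff [OF iso] by (rule SQS_InrI [OF that])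
    then show ?thesis using g by (simp add: SQS_Inl4_iff)
  qed
  then have R: "additive_bij (\<lambda>y. g y + g 0)"
    using \<open>inj g\<close> by (rule additive_bij_if_inj_preserves_planes)
  have "\<tau> (g (\<tau> w) + g 0) = f w + f 0" for w
  proof (cases "w = 0")
    case False
    then have "\<tau> w \<noteq> 0" using \<tau> by (metis bij_is_inj injD)
    then have "\<sigma> ` {Inl w, Inl 0, Inr (\<tau> w), Inr 0} \<in> SQS \<tau>"
      unfolding design_iso_image_mem_iff [OF iso] by (simp add: SQS_mixedI)
    moreover have "{Inr (f w), Inr (f 0), Inl (g (\<tau> w)), Inl (g 0)} =
        {Inl (g (\<tau> w)), Inl (g 0), Inr (f w), Inr (f 0)}" by auto
    ultimately have "{Inl (g (\<tau> w)), Inl (g 0), Inr (f w), Inr (f 0)} \<in> SQS \<tau>"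
      using f g by simp
    then show ?thesis by (simp add: SQS_mixed_iff)
  qed (simp add: \<tau>(2))
  then show ?thesis using P R unfolding inv_in_double_coset_def by blast
qed

lemma translation_automorphism: "automorphism (map_sum ((+) s) ((+) t)) (SQS \<tau>)"
proof -
  let ?\<sigma> = "map_sum ((+) s) ((+) t)"
  have "?\<sigma> (?\<sigma> p) = p" for p by (cases p) simp_all
  then have involution: "?\<sigma> \<circ> ?\<sigma> = id" by (simp add: fun_eq_iff)
  have blocks: "?\<sigma> ` Q \<in> SQS \<tau>" if "Q \<in> SQS \<tau>" for Q
    using that
  proof (cases rule: SQS_blockE)
    case (left a b c d)
    then show ?thesis by (simp add: SQS_InlI add_ac)
  next
    case (right a b c d)
    then show ?thesis by (simp add: SQS_InrI add_ac)
  next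
    case (mixed a c b d)
    then show ?thesis by (simp add: SQS_mixedI add_ac)
  qed
  show ?thesis
    unfolding automorphism_iff_design_iso by (rule design_isoI [OF involution involution blocks blocks])
qed

lemma point_transitiveI:
  assumes "\<And>p. \<exists>\<sigma>. automorphism \<sigma> S \<and> \<sigma> p = p0"
  shows "point_transitive S"
  unfolding point_transitive_def
proof (intro allI)
  fix p q
  obtain \<sigma> \<rho> where \<sigma>: "automorphism \<sigma> S" "\<sigma> p = p0" and \<rho>: "automorphism \<rho> S" "\<rho> q = p0"
    using assms by metis
  have "automorphism (inv \<rho> \<circ> \<sigma>) S"
    using \<sigma>(1) \<rho>(1) by (simp add: automorphism_iff_design_iso design_iso_comp design_iso_inv)
  moreover have "(inv \<rho> \<circ> \<sigma>) p = q"
    using \<sigma>(2) \<rho> by (simp add: automorphism_def bij_is_inj inv_f_eq)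
  ultimately show "\<exists>\<sigma>. automorphism \<sigma> S \<and> \<sigma> p = q" by blast
qed

lemma inv_in_double_coset_imp_point_transitive:
  fixes \<tau> :: "bit ^ 'n \<Rightarrow> bit ^ 'n"
  assumes \<tau>: "bij \<tau>" "\<tau> 0 = 0" "inv_in_double_coset \<tau>"
  shows "point_transitive (SQS \<tau>)"
proof (rule point_transitiveI)
  obtain P R where P: "additive_bij P" and R: "additive_bij R" and \<tau>R\<tau>: "\<And>y. \<tau> (R (\<tau> y)) = P y"
    using \<tau>(3) unfolding inv_in_double_coset_def by blast
  fix p :: "'n pt"
  show "\<exists>\<sigma>. automorphism \<sigma> (SQS \<tau>) \<and> \<sigma> p = Inl 0"
  proof (cases p)
    case (Inl x)
    then have "map_sum ((+) x) ((+) 0) p = Inl 0" by simp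
    then show ?thesis using translation_automorphism by blast
  next
    case (Inr y)
    have "design_iso (map_sum ((+) 0) ((+) y)) (SQS \<tau>) (SQS \<tau>)"
      using translation_automorphism by (simp only: automorphism_iff_design_iso)
    then have "automorphism (swap_sides P R \<circ> map_sum ((+) 0) ((+) y)) (SQS \<tau>)"
      unfolding automorphism_iff_design_iso
      by (rule design_iso_comp) (rule swap_sides_design_iso [OF P R \<tau>(1,2) \<tau>R\<tau>])
    moreover have "(swap_sides P R \<circ> map_sum ((+) 0) ((+) y)) p = Inl 0"
      using Inr R by (simp add: additive_bij_def additive.zero)
    ultimately show ?thesis by blast
  qed
qed

theorem corollary1:
  fixes \<tau> :: "bit ^ 'n \<Rightarrow> bit ^ 'n"
  assumes "bij \<tau>" and "\<tau> 0 = 0"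
  shows "point_transitive (SQS \<tau>) \<longleftrightarrow>
         (\<exists>A B :: bit ^ 'n ^ 'n. invertible A \<and> invertible B \<and>
            (\<forall>x. inv \<tau> x = A *v \<tau> (B *v x)))"
  unfolding inv_in_double_coset_iff_matrices [OF assms(1)]
proof
  assume pt: "point_transitive (SQS \<tau>)"
  show "inv_in_double_coset \<tau>"
  proof (cases "Modules.additive \<tau>")
    case True
    then show ?thesis using assms(1) by (simp add: additive_bij_def additive_bij_imp_inv_in_double_coset)
  next
    case False
    obtain \<sigma> where \<sigma>: "automorphism \<sigma> (SQS \<tau>)" "\<sigma> (Inl 0) = Inr 0"
      using pt unfolding point_transitive_def by blast
    show ?thesis
      using side_swapping_automorphism_imp_inv_in_double_coset [OF assms \<sigma>(1)]
        automorphism_swaps_sides [OF assms False \<sigma>] by blast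
  qed
next
  assume "inv_in_double_coset \<tau>"
  then show "point_transitive (SQS \<tau>)" by (rule inv_in_double_coset_imp_point_transitive [OF assms])
qed

end
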